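(* Let $(V,d,k,q)$ be an instance of the individually fair $k$-center with outliers problem (IF$k$CO) as defined in the context, let $l\ge 0$ be an integer, and let $(S,O,\sigma)$ be the output of the refined algorithm (Algorithm 3) described in the context, run on this instance with parameter $l$ (with arbitrary tie-breaking). Then $(S,O,\sigma)$ is a feasible solution, i.e. $|S|\le k$ and $|O|\le q$, and $$\alpha(S,O,\sigma)\le 4\cdot \mathrm{OPT},$$ where $\mathrm{OPT}$ is the minimum of $\alpha(S',O',\sigma')$ over all feasible solutions $(S',O',\sigma')$. That is, Algorithm 3 is a $4$-approximation algorithm for the IF$k$CO.
   Context: IF$k$CO instance: a finite set $V$ with $|V|=n$, a metric $d$ on $V$ (nonnegative, symmetric, $d_{ii}=0$, triangle inequality), and integers $k\ge 1$ and $q\ge 0$. For $i\in V$, $NR_q(i)$ is the distance from $i$ to its $\lceil (n-q)/k\rceil$-th nearest neighbor in $V$, where $i$ counts as its own (first) nearest neighbor. A solution is $(S,O,\sigma)$ with $S,O\subseteq V$ and $\sigma:V\setminus O\to S$; feasible if $|S|\le k$, $|O|\le q$. Its outlier-related fairness ratio is $\alpha(S,O,\sigma)=\max_{i\in V\setminus O} d_{\sigma(i)i}/NR_q(i)$. For a parameter $\beta>0$, the procedure $A(\beta)$ is: set $P:=V$, $S:=\emptyset$; while $P\ne\emptyset$ and $|S|<k$: pick $s\in P$ minimizing $NR_q(i)$ over $i\in P$, set $S:=S\cup\{s\}$, $P:=\{i\in P: d_{is}>\beta\, NR_q(i)\}$; finally set $O:=P$ and let $\sigma(i)$ be a nearest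 center in $S$ for each $i\in V\setminus O$. Algorithm 2 is $A(2)$. Algorithm 3 (input: instance and integer $l\ge0$): compute $(S,O,\sigma):=$ output of Algorithm 2; set $t:=0$, $\beta_1:=1$, $\beta_2:=2$, $\beta:=\beta_1$. While $t<l$: run $A(\beta)$ obtaining $(S_\beta,O_\beta,\sigma_\beta)$; if $|O_\beta|>q$, set $\beta_1:=\beta$; if $|O_\beta|\le q$, set $(S,O,\sigma):=(S_\beta,O_\beta,\sigma_\beta)$ and $\beta_2:=\beta$; in either case then set $\beta:=(\beta_1+\beta_2)/2$ and $t:=t+1$. Output $(S,O,\sigma)$. *)

theory Defs
  imports Complex_Main "HOL-Library.Multiset"
begin

definition is_metric_on :: "'a set \<Rightarrow> ('a \<Rightarrow> 'a \<Rightarrow> real) \<Rightarrow> bool" where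
  "is_metric_on V d \<longleftrightarrow>
     (\<forall>i\<in>V. \<forall>j\<in>V. d i j \<ge> 0 \<and> d i j = d j i) \<and>
     (\<forall>i\<in>V. d i i = 0) \<and>
     (\<forall>i\<in>V. \<forall>j\<in>V. \<forall>l\<in>V. d i l \<le> d i j + d j l)"

definition nr_rank :: "'a set \<Rightarrow> nat \<Rightarrow> nat \<Rightarrow> nat" where
  "nr_rank V k q = nat \<lceil>(real (card V) - real q) / real k\<rceil>"

text \<open>NR_q(i): distance from i to its m-th nearest neighbour in V (i itself counts,
  distances sorted increasingly with multiplicity; the m-th entry has index m-1).\<close>
definition NR :: "'a set \<Rightarrow> ('a \<Rightarrow> 'a \<Rightarrow> real) \<Rightarrow> nat \<Rightarrow> nat \<Rightarrow> 'a \<Rightarrow> real" where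
  "NR V d k q i =
     sorted_list_of_multiset (image_mset (d i) (mset_set V)) ! (nr_rank V k q - 1)"

text \<open>Solutions (S,Out,sigma); sigma is only relevant on V - Out.\<close>
definition feasible ::
  "'a set \<Rightarrow> nat \<Rightarrow> nat \<Rightarrow> 'a set \<Rightarrow> 'a set \<Rightarrow> ('a \<Rightarrow> 'a) \<Rightarrow> bool" where
  "feasible V k q S Out \<sigma> \<longleftrightarrow>
     S \<subseteq> V \<and> Out \<subseteq> V \<and> card S \<le> k \<and> card Out \<le> q \<and> (\<forall>i\<in>V - Out. \<sigma> i \<in> S)"

definition alpha ::
  "'a set \<Rightarrow> ('a \<Rightarrow> 'a \<Rightarrow> real) \<Rightarrow> nat \<Rightarrow> nat \<Rightarrow> 'a set \<Rightarrow> 'a set \<Rightarrow> ('a \<Rightarrow> 'a) \<Rightarrow> real" where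
  "alpha V d k q S Out \<sigma> =
     Max (insert 0 ((\<lambda>i. d (\<sigma> i) i / NR V d k q i) ` (V - Out)))"

definition OPT :: "'a set \<Rightarrow> ('a \<Rightarrow> 'a \<Rightarrow> real) \<Rightarrow> nat \<Rightarrow> nat \<Rightarrow> real" where
  "OPT V d k q = Inf {alpha V d k q S Out \<sigma> | S Out \<sigma>. feasible V k q S Out \<sigma>}"

text \<open>One iteration of the while loop of A(beta) on state (P,S), with arbitrary
  tie-breaking among minimisers of NR over P.\<close>
definition A_step ::
  "'a set \<Rightarrow> ('a \<Rightarrow> 'a \<Rightarrow> real) \<Rightarrow> nat \<Rightarrow> nat \<Rightarrow> real \<Rightarrow>
   'a set \<times> 'a set \<Rightarrow> 'a set \<times> 'a set \<Rightarrow> bool" where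
  "A_step V d k q \<beta> st st' \<longleftrightarrow>
     (case st of (P, S) \<Rightarrow>
       P \<noteq> {} \<and> card S < k \<and>
       (\<exists>s\<in>P. (\<forall>i\<in>P. NR V d k q s \<le> NR V d k q i) \<and>
              st' = ({i\<in>P. d i s > \<beta> * NR V d k q i}, S \<union> {s})))"

definition A_out ::
  "'a set \<Rightarrow> ('a \<Rightarrow> 'a \<Rightarrow> real) \<Rightarrow> nat \<Rightarrow> nat \<Rightarrow> real \<Rightarrow>
   'a set \<Rightarrow> 'a set \<Rightarrow> ('a \<Rightarrow> 'a) \<Rightarrow> bool" where
  "A_out V d k q \<beta> S Out \<sigma> \<longleftrightarrow>
     (\<exists>P. (A_step V d k q \<beta>)\<^sup>*\<^sup>* (V, {}) (P, S) \<and> (P = {} \<or> \<not> card S < k) \<and>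
          Out = P \<and>
          (\<forall>i\<in>V - Out. \<sigma> i \<in> S \<and> (\<forall>s\<in>S. d (\<sigma> i) i \<le> d s i)))"

text \<open>The bisection loop of Algorithm 3. First argument: number of remaining
  iterations (l - t); then beta1, beta2, beta; current solution; final output.\<close>
inductive alg3_loop ::
  "'a set \<Rightarrow> ('a \<Rightarrow> 'a \<Rightarrow> real) \<Rightarrow> nat \<Rightarrow> nat \<Rightarrow> nat \<Rightarrow> real \<Rightarrow> real \<Rightarrow> real \<Rightarrow>
   'a set \<times> 'a set \<times> ('a \<Rightarrow> 'a) \<Rightarrow> 'a set \<times> 'a set \<times> ('a \<Rightarrow> 'a) \<Rightarrow> bool"
  for V d k q where
  stop: "alg3_loop V d k q 0 \<beta>1 \<beta>2 \<beta> sol sol"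
| infeas: "A_out V d k q \<beta> S' Out' \<sigma>' \<Longrightarrow> card Out' > q \<Longrightarrow>
     alg3_loop V d k q r \<beta> \<beta>2 ((\<beta> + \<beta>2) / 2) sol res \<Longrightarrow>
     alg3_loop V d k q (Suc r) \<beta>1 \<beta>2 \<beta> sol res"
| feas: "A_out V d k q \<beta> S' Out' \<sigma>' \<Longrightarrow> card Out' \<le> q \<Longrightarrow>
     alg3_loop V d k q r \<beta>1 \<beta> ((\<beta>1 + \<beta>) / 2) (S', Out', \<sigma>') res \<Longrightarrow>
     alg3_loop V d k q (Suc r) \<beta>1 \<beta>2 \<beta> sol res"

definition alg3_out ::
  "'a set \<Rightarrow> ('a \<Rightarrow> 'a \<Rightarrow> real) \<Rightarrow> nat \<Rightarrow> nat \<Rightarrow> nat \<Rightarrow>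
   'a set \<Rightarrow> 'a set \<Rightarrow> ('a \<Rightarrow> 'a) \<Rightarrow> bool" where
  "alg3_out V d k q l S Out \<sigma> \<longleftrightarrow>
     (\<exists>S0 Out0 \<sigma>0. A_out V d k q 2 S0 Out0 \<sigma>0 \<and>
        alg3_loop V d k q l 1 2 1 (S0, Out0, \<sigma>0) (S, Out, \<sigma>))"

end

theory Submission
  imports Defs "HOL-Library.FuncSet"
begin

text \<open>Write m for the rank \<lceil>(n - q)/k\<rceil>. For \<beta> \<ge> 2 the centers opened by A(\<beta>) have pairwise
  disjoint NR-balls, each containing at least m points and no remaining point; so if A(\<beta>) opens
  k centers, at most n - k m \<le> q points remain as outliers. Every point served by A(\<beta>) is
  within \<beta> NR of a center, so its fairness ratio is at most \<beta>, and the bisection only ever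
  accepts feasible outputs of A(\<beta>) with \<beta> \<le> 2: the result is feasible with ratio at most 2.
  Conversely, in any feasible solution some center c serves at least m points (pigeonhole); if
  j is the one farthest from c, all of them lie within 2 d(c, j) of j, hence NR(j) \<le> 2 d(c, j)
  and OPT \<ge> 1/2.\<close>

lemma sorted_nth_le_iff_length_filter:
  fixes xs :: "'a::linorder list"
  assumes "sorted xs" "i < length xs"
  shows "xs ! i \<le> t \<longleftrightarrow> Suc i \<le> length (filter (\<lambda>x. x \<le> t) xs)"
  using assms
proof (induction xs arbitrary: i)
  case Nil
  then show ?case by simp
next
  case (Cons x xs)
  show ?case
  proof (cases "x \<le> t")
    case True
    with Cons show ?thesis by (cases i) auto
  next
    case False
    have "x \<le> (x # xs) ! i"
      using sorted_nth_mono[OF Cons.prems(1), of 0 i] Cons.prems(2) by simp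
    moreover have "filter (\<lambda>y. y \<le> t) (x # xs) = []"
      using Cons.prems(1) False by (auto simp: filter_empty_conv)
    ultimately show ?thesis using False by auto
  qed
qed

lemma nth_sorted_image_mset_le_iff:
  fixes f :: "'a \<Rightarrow> 'b::linorder"
  assumes "finite V" "i < card V"
  shows "sorted_list_of_multiset (image_mset f (mset_set V)) ! i \<le> t \<longleftrightarrow>
    Suc i \<le> card {j\<in>V. f j \<le> t}"
proof -
  let ?xs = "sorted_list_of_multiset (image_mset f (mset_set V))"
  have "length (filter (\<lambda>x. x \<le> t) ?xs) = size (filter_mset (\<lambda>x. x \<le> t) (mset ?xs))"
    by (metis mset_filter size_mset)
  also have "\<dots> = card {j\<in>V. f j \<le> t}"
    using assms(1) by (simp add: filter_mset_image_mset)
  finally have "length (filter (\<lambda>x. x \<le> t) ?xs) = card {j\<in>V. f j \<le> t}" .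
  moreover have "length ?xs = card V"
    by (metis mset_sorted_list_of_multiset size_image_mset size_mset size_mset_set)
  ultimately show ?thesis
    using sorted_nth_le_iff_length_filter[of ?xs i t] assms(2) by simp
qed

lemma NR_le_iff:
  assumes "finite V" "1 \<le> nr_rank V k q" "nr_rank V k q \<le> card V"
  shows "NR V d k q i \<le> t \<longleftrightarrow> nr_rank V k q \<le> card {j\<in>V. d i j \<le> t}"
  using nth_sorted_image_mset_le_iff[OF assms(1), of "nr_rank V k q - 1" "d i" t] assms(2,3)
  unfolding NR_def by simp

text \<open>For rank 0 the index nr_rank - 1 truncates to 0, so NR i would be the smallest distance
  from i, which is at most d i i = 0.\<close>
lemma nr_rank_pos:
  assumes "finite V" "i \<in> V" "d i i = 0" "0 < NR V d k q i"
  shows "1 \<le> nr_rank V k q"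
proof (rule ccontr)
  assume "\<not> 1 \<le> nr_rank V k q"
  then have "NR V d k q i = sorted_list_of_multiset (image_mset (d i) (mset_set V)) ! 0"
    unfolding NR_def by simp
  moreover have "0 < card {j\<in>V. d i j \<le> 0}" "0 < card V"
    using assms(1-3) by (auto simp: card_gt_0_iff)
  ultimately have "NR V d k q i \<le> 0"
    using nth_sorted_image_mset_le_iff[OF assms(1), of 0 "d i" 0] by simp
  then show False using assms(4) by simp
qed

lemma nr_rank_le_card:
  assumes "1 \<le> k"
  shows "nr_rank V k q \<le> card V"
proof -
  have "card V \<le> k * card V"
    using assms by simp
  then have "real (card V) - real q \<le> real k * real (card V)"
    by (metis of_nat_0_le_iff of_nat_mono of_nat_mult diff_le_eq le_add_same_cancel1 order_trans)
  then show ?thesis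
    using assms unfolding nr_rank_def by (simp add: divide_le_eq mult.commute)
qed

lemma card_le_nr_rank:
  assumes "1 \<le> k"
  shows "card V \<le> q + k * nr_rank V k q"
proof -
  have "(real (card V) - real q) / real k \<le> real (nr_rank V k q)"
    unfolding nr_rank_def by (rule real_nat_ceiling_ge)
  then have "real (card V) \<le> real q + real k * real (nr_rank V k q)"
    using assms by (simp add: divide_le_eq algebra_simps)
  then show ?thesis by (metis of_nat_add of_nat_le_iff of_nat_mult)
qed

lemma nr_rank_minus_one_lt:
  assumes "1 \<le> k" "1 \<le> nr_rank V k q"
  shows "q + k * (nr_rank V k q - 1) < card V"
proof -
  have "real (nr_rank V k q) - 1 < (real (card V) - real q) / real k"
    using assms(2) ceiling_correct[of "(real (card V) - real q) / real k"]
    unfolding nr_rank_def by linarith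
  then have "real q + real k * (real (nr_rank V k q) - 1) < real (card V)"
    using assms(1) by (simp add: less_divide_eq algebra_simps)
  then have "real (q + k * (nr_rank V k q - 1)) < real (card V)"
    using assms(2) by (simp add: of_nat_diff)
  then show ?thesis by (simp only: of_nat_less_iff)
qed

lemma alpha_le_iff:
  assumes "finite V"
  shows "alpha V d k q S Out \<sigma> \<le> c \<longleftrightarrow>
    0 \<le> c \<and> (\<forall>i\<in>V - Out. d (\<sigma> i) i / NR V d k q i \<le> c)"
  unfolding alpha_def using assms by (subst Max_le_iff) auto

locale fair_kco_instance =
  fixes V :: "'a set" and d :: "'a \<Rightarrow> 'a \<Rightarrow> real" and k q :: nat
  assumes finite_V: "finite V"
    and metric: "is_metric_on V d"
    and k_pos: "1 \<le> k"
    and NR_pos: "\<forall>i\<in>V. 0 < NR V d k q i"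
begin

abbreviation "N \<equiv> NR V d k q"
abbreviation "m \<equiv> nr_rank V k q"

lemma d_sym: "i \<in> V \<Longrightarrow> j \<in> V \<Longrightarrow> d i j = d j i"
  and d_self: "i \<in> V \<Longrightarrow> d i i = 0"
  and d_triangle: "i \<in> V \<Longrightarrow> j \<in> V \<Longrightarrow> l \<in> V \<Longrightarrow> d i l \<le> d i j + d j l"
  using metric unfolding is_metric_on_def by blast+

lemma rank_pos:
  assumes "i \<in> V"
  shows "1 \<le> m"
  using nr_rank_pos[where d = d, OF finite_V assms d_self[OF assms]] NR_pos assms by simp

definition nr_ball :: "'a \<Rightarrow> 'a set" where
  "nr_ball s = {j\<in>V. d s j \<le> N s}"

lemma card_nr_ball:
  assumes "s \<in> V"
  shows "m \<le> card (nr_ball s)"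
  using NR_le_iff[OF finite_V rank_pos[OF assms] nr_rank_le_card[OF k_pos], of d s "N s"]
  unfolding nr_ball_def by simp

definition greedy_inv :: "real \<Rightarrow> 'a set \<times> 'a set \<Rightarrow> bool" where
  "greedy_inv \<beta> = (\<lambda>(P, S). P \<subseteq> V \<and> S \<subseteq> V \<and> finite S \<and> card S \<le> k \<and>
     (\<forall>i\<in>V - P. \<exists>s\<in>S. d i s \<le> \<beta> * N i) \<and>
     (\<forall>i\<in>P. \<forall>s\<in>S. \<beta> * N i < d i s \<and> N s \<le> N i) \<and>
     (\<forall>s\<in>S. \<forall>s'\<in>S. s \<noteq> s' \<longrightarrow> \<beta> * max (N s) (N s') < d s s'))"

lemma greedy_inv_step:
  assumes "A_step V d k q \<beta> (P, S) (P', S')" "greedy_inv \<beta> (P, S)"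
  shows "greedy_inv \<beta> (P', S')"
proof -
  obtain s where s: "s \<in> P" "\<forall>i\<in>P. N s \<le> N i" "card S < k"
    and P': "P' = {i\<in>P. \<beta> * N i < d i s}" and S': "S' = S \<union> {s}"
    using assms(1) unfolding A_step_def by auto
  have inv: "P \<subseteq> V" "S \<subseteq> V" "finite S"
    "\<forall>i\<in>V - P. \<exists>s\<in>S. d i s \<le> \<beta> * N i"
    "\<forall>i\<in>P. \<forall>s\<in>S. \<beta> * N i < d i s \<and> N s \<le> N i"
    "\<forall>s\<in>S. \<forall>s'\<in>S. s \<noteq> s' \<longrightarrow> \<beta> * max (N s) (N s') < d s s'"
    using assms(2) unfolding greedy_inv_def by auto
  have "P' \<subseteq> V" "S' \<subseteq> V" "finite S'" "card S' \<le> k"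
    using inv(1-3) s(1,3) unfolding P' S' by (auto simp: card_insert_if)
  moreover have "\<forall>i\<in>V - P'. \<exists>s\<in>S'. d i s \<le> \<beta> * N i"
  proof
    fix i assume "i \<in> V - P'"
    then have "i \<in> V - P \<or> d i s \<le> \<beta> * N i" unfolding P' by auto
    then show "\<exists>s\<in>S'. d i s \<le> \<beta> * N i" using inv(4) unfolding S' by blast
  qed
  moreover have "\<forall>i\<in>P'. \<forall>s\<in>S'. \<beta> * N i < d i s \<and> N s \<le> N i"
    using inv(5) s(2) unfolding P' S' by blast
  moreover have "\<beta> * max (N s) (N a) < d s a" "\<beta> * max (N a) (N s) < d a s" if "a \<in> S" for a
  proof -
    have "N a \<le> N s" "\<beta> * N s < d s a" using inv(5) s(1) that by auto
    moreover have "d a s = d s a" using d_sym inv(1,2) s(1) that by blast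
    ultimately show "\<beta> * max (N s) (N a) < d s a" "\<beta> * max (N a) (N s) < d a s"
      by (simp_all add: max_def)
  qed
  then have "\<forall>x\<in>S'. \<forall>y\<in>S'. x \<noteq> y \<longrightarrow> \<beta> * max (N x) (N y) < d x y"
    using inv(6) unfolding S' by (metis Un_iff singletonD)
  ultimately show ?thesis
    unfolding greedy_inv_def prod.case by (intro conjI)
qed

lemma greedy_inv_reachable:
  assumes "(A_step V d k q \<beta>)\<^sup>*\<^sup>* (V, {}) st"
  shows "greedy_inv \<beta> st"
  using assms
proof (induction rule: rtranclp_induct)
  case base
  show ?case unfolding greedy_inv_def by simp
next
  case (step st st')
  then show ?case
    using greedy_inv_step by (metis prod.exhaust)
qed

lemma nr_ball_subset_covered:
  assumes "1 \<le> \<beta>" "greedy_inv \<beta> (P, S)" "s \<in> S"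
  shows "nr_ball s \<subseteq> V - P"
proof
  fix x assume x: "x \<in> nr_ball s"
  have inv: "S \<subseteq> V" "\<forall>i\<in>P. \<forall>s\<in>S. \<beta> * N i < d i s \<and> N s \<le> N i"
    using assms(2) unfolding greedy_inv_def by auto
  have "x \<in> V" "d s x \<le> N s" using x unfolding nr_ball_def by auto
  moreover have "x \<notin> P"
  proof
    assume "x \<in> P"
    then have "\<beta> * N x < d x s" "N s \<le> N x" using inv(2) assms(3) by auto
    moreover have "N x \<le> \<beta> * N x" using NR_pos \<open>x \<in> V\<close> assms(1) by simp
    moreover have "d x s = d s x" using d_sym inv(1) assms(3) \<open>x \<in> V\<close> by blast
    ultimately show False using \<open>d s x \<le> N s\<close> by linarith
  qed
  ultimately show "x \<in> V - P" by simp
qed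

text \<open>Centers opened with \<beta> \<ge> 2 are separated by more than the sum of their NR radii.\<close>
lemma nr_balls_disjoint:
  assumes "2 \<le> \<beta>" "greedy_inv \<beta> (P, S)" "s \<in> S" "s' \<in> S" "s \<noteq> s'"
  shows "nr_ball s \<inter> nr_ball s' = {}"
proof (rule ccontr)
  assume "nr_ball s \<inter> nr_ball s' \<noteq> {}"
  then obtain x where x: "x \<in> V" "d s x \<le> N s" "d s' x \<le> N s'"
    unfolding nr_ball_def by auto
  have inv: "S \<subseteq> V" "\<beta> * max (N s) (N s') < d s s'"
    using assms(2-5) unfolding greedy_inv_def by auto
  have V: "s \<in> V" "s' \<in> V" using inv(1) assms(3,4) by auto
  have "d s s' \<le> d s x + d x s'" using d_triangle[OF V(1) x(1) V(2)] .
  also have "\<dots> = d s x + d s' x" using d_sym[OF x(1) V(2)] by simp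
  also have "\<dots> \<le> 2 * max (N s) (N s')" using x(2,3) by (simp add: le_max_iff_disj)
  also have "\<dots> \<le> \<beta> * max (N s) (N s')"
    using assms(1) NR_pos V(1) by (intro mult_right_mono) (auto simp: le_max_iff_disj less_imp_le)
  finally show False using inv(2) by simp
qed

lemma greedy_card_covered:
  assumes "2 \<le> \<beta>" "greedy_inv \<beta> (P, S)"
  shows "card S * m \<le> card (V - P)"
proof -
  have S: "S \<subseteq> V" "finite S" using assms(2) unfolding greedy_inv_def by auto
  have "card S * m = (\<Sum>s\<in>S. m)" by simp
  also have "\<dots> \<le> (\<Sum>s\<in>S. card (nr_ball s))"
    using card_nr_ball S(1) by (intro sum_mono) auto
  also have "\<dots> = card (\<Union>s\<in>S. nr_ball s)"
    using nr_balls_disjoint[OF assms] S(2) finite_V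
    by (intro card_UN_disjoint[symmetric]) (auto simp: nr_ball_def)
  also have "\<dots> \<le> card (V - P)"
    using nr_ball_subset_covered[of \<beta> P S] assms finite_V by (intro card_mono) auto
  finally show ?thesis .
qed

lemma A_out_card_outliers:
  assumes "2 \<le> \<beta>" "A_out V d k q \<beta> S Out \<sigma>"
  shows "card Out \<le> q"
proof -
  obtain P where run: "(A_step V d k q \<beta>)\<^sup>*\<^sup>* (V, {}) (P, S)"
    and halt: "P = {} \<or> \<not> card S < k" and Out: "Out = P"
    using assms(2) unfolding A_out_def by blast
  have inv: "greedy_inv \<beta> (P, S)" using greedy_inv_reachable[OF run] .
  show ?thesis
  proof (cases "P = {}")
    case True
    then show ?thesis by (simp add: Out)
  next
    case False
    have "P \<subseteq> V" "card S \<le> k" using inv unfolding greedy_inv_def by auto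
    then have "card S = k" using halt False by simp
    then have "k * m \<le> card (V - P)" using greedy_card_covered[OF assms(1) inv] by simp
    moreover have "card V = card P + card (V - P)"
      using card_Int_Diff[OF finite_V, of P] \<open>P \<subseteq> V\<close> by (simp add: Int_absorb1)
    moreover have "card V \<le> q + k * m" using card_le_nr_rank[OF k_pos] .
    ultimately show ?thesis by (simp add: Out)
  qed
qed

lemma A_out_alpha_le:
  assumes "0 \<le> \<beta>" "A_out V d k q \<beta> S Out \<sigma>"
  shows "alpha V d k q S Out \<sigma> \<le> \<beta>"
proof -
  obtain P where run: "(A_step V d k q \<beta>)\<^sup>*\<^sup>* (V, {}) (P, S)" and Out: "Out = P"
    and nearest: "\<forall>i\<in>V - Out. \<sigma> i \<in> S \<and> (\<forall>s\<in>S. d (\<sigma> i) i \<le> d s i)"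
    using assms(2) unfolding A_out_def by blast
  have inv: "S \<subseteq> V" "\<forall>i\<in>V - P. \<exists>s\<in>S. d i s \<le> \<beta> * N i"
    using greedy_inv_reachable[OF run] unfolding greedy_inv_def by auto
  have ratio: "d (\<sigma> i) i / N i \<le> \<beta>" if i: "i \<in> V - Out" for i
  proof -
    obtain s where s: "s \<in> S" "d i s \<le> \<beta> * N i" using inv(2) i Out by blast
    have "d (\<sigma> i) i \<le> d s i" using nearest i s(1) by blast
    also have "\<dots> = d i s" using d_sym inv(1) s(1) i by blast
    finally show ?thesis using s(2) NR_pos i by (simp add: divide_le_eq)
  qed
  then show ?thesis
    unfolding alpha_le_iff[OF finite_V] using assms(1) by blast
qed

lemma A_out_feasible:
  assumes "A_out V d k q \<beta> S Out \<sigma>" "card Out \<le> q"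
  shows "feasible V k q S Out \<sigma>"
proof -
  obtain P where run: "(A_step V d k q \<beta>)\<^sup>*\<^sup>* (V, {}) (P, S)" and "Out = P"
    and "\<forall>i\<in>V - Out. \<sigma> i \<in> S"
    using assms(1) unfolding A_out_def by blast
  then show ?thesis
    using greedy_inv_reachable[OF run] assms(2) unfolding greedy_inv_def feasible_def by auto
qed

lemma feasible_large_cluster:
  assumes "feasible V k q S Out \<sigma>" "V \<noteq> {}"
  obtains c where "c \<in> S" "m \<le> card (\<sigma> -` {c} \<inter> (V - Out))"
proof -
  have F: "S \<subseteq> V" "Out \<subseteq> V" "card S \<le> k" "card Out \<le> q" "\<sigma> \<in> V - Out \<rightarrow> S"
    using assms(1) unfolding feasible_def by auto
  obtain i where "i \<in> V" using assms(2) by blast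
  then have m: "1 \<le> m" by (rule rank_pos)
  have "card V = card Out + card (V - Out)"
    using card_Int_Diff[OF finite_V, of Out] F(2) by (simp add: Int_absorb1)
  then have large: "k * (m - 1) < card (V - Out)"
    using nr_rank_minus_one_lt[OF k_pos m] F(4) by linarith
  then have "V - Out \<noteq> {}" by (metis card.empty less_nat_zero_code)
  then have "S \<noteq> {}" using F(5) by blast
  then obtain c where c: "c \<in> S" "card (V - Out) \<le> card (\<sigma> -` {c} \<inter> (V - Out)) * card S"
    using pigeonhole_card[OF F(5)] finite_V finite_subset[OF F(1) finite_V] by blast
  have "\<not> card (\<sigma> -` {c} \<inter> (V - Out)) \<le> m - 1"
  proof
    assume "card (\<sigma> -` {c} \<inter> (V - Out)) \<le> m - 1"
    then have "card (V - Out) \<le> (m - 1) * card S"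
      using c(2) mult_le_mono1 order_trans by blast
    also have "\<dots> \<le> k * (m - 1)" using F(3) by (simp add: mult.commute)
    finally show False using large by simp
  qed
  then show ?thesis using that c(1) by simp
qed

lemma half_le_alpha:
  assumes "feasible V k q S Out \<sigma>" "V \<noteq> {}"
  shows "1 / 2 \<le> alpha V d k q S Out \<sigma>"
proof -
  obtain c where c: "c \<in> S" "m \<le> card (\<sigma> -` {c} \<inter> (V - Out))"
    using feasible_large_cluster[OF assms] .
  define C where "C = \<sigma> -` {c} \<inter> (V - Out)"
  have cV: "c \<in> V" using c(1) assms(1) unfolding feasible_def by auto
  obtain i where "i \<in> V" using assms(2) by blast
  then have "0 < card C" using rank_pos c(2) unfolding C_def by fastforce
  then have C: "C \<noteq> {}" "finite C" by (simp_all add: card_gt_0_iff)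
  have "Max (d c ` C) \<in> d c ` C" using C by simp
  then obtain j where j: "j \<in> C" "d c j = Max (d c ` C)" by (metis imageE)
  then have j_far: "\<forall>x\<in>C. d c x \<le> d c j" using C(2) by simp
  have jV: "j \<in> V" and sj: "\<sigma> j = c" and jOut: "j \<in> V - Out" using j(1) unfolding C_def by auto
  have "C \<subseteq> {x\<in>V. d j x \<le> 2 * d c j}"
  proof
    fix x assume x: "x \<in> C"
    then have xV: "x \<in> V" unfolding C_def by auto
    have "d j x \<le> d j c + d c x" using d_triangle[OF jV cV xV] .
    also have "\<dots> \<le> 2 * d c j" using d_sym[OF jV cV] j_far x by simp
    finally show "x \<in> {x\<in>V. d j x \<le> 2 * d c j}" using xV by simp
  qed
  then have "card C \<le> card {x\<in>V. d j x \<le> 2 * d c j}"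
    using finite_V by (intro card_mono) simp_all
  then have "N j \<le> 2 * d c j"
    using NR_le_iff[OF finite_V rank_pos[OF jV] nr_rank_le_card[OF k_pos], of d j "2 * d c j"]
      c(2) unfolding C_def by simp
  then have "1 / 2 \<le> d (\<sigma> j) j / N j"
    using NR_pos jV sj d_sym[OF cV jV] by (simp add: le_divide_eq)
  also have "\<dots> \<le> alpha V d k q S Out \<sigma>"
    using alpha_le_iff[OF finite_V, of d k q S Out \<sigma> "alpha V d k q S Out \<sigma>"] jOut by simp
  finally show ?thesis .
qed

lemma alpha_le_4_OPT:
  assumes "feasible V k q S Out \<sigma>" "alpha V d k q S Out \<sigma> \<le> 2"
  shows "alpha V d k q S Out \<sigma> \<le> 4 * OPT V d k q"
proof (cases "V = {}")
  case True
  then have "alpha V d k q S' Out' \<sigma>' = 0" for S' Out' \<sigma>'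
    unfolding alpha_def by simp
  moreover have "0 \<le> OPT V d k q"
    unfolding OPT_def using assms(1) calculation by (intro cInf_greatest) auto
  ultimately show ?thesis by simp
next
  case False
  have "1 / 2 \<le> OPT V d k q"
    unfolding OPT_def using assms(1) half_le_alpha[OF _ False] by (intro cInf_greatest) auto
  then show ?thesis using assms(2) by simp
qed

definition feasible_within :: "real \<Rightarrow> 'a set \<times> 'a set \<times> ('a \<Rightarrow> 'a) \<Rightarrow> bool" where
  "feasible_within c = (\<lambda>(S, Out, \<sigma>). feasible V k q S Out \<sigma> \<and> alpha V d k q S Out \<sigma> \<le> c)"

lemma alg3_loop_feasible_within:
  assumes "alg3_loop V d k q r \<beta>1 \<beta>2 \<beta> sol res"
    and "0 \<le> \<beta>1" "\<beta>1 \<le> \<beta>" "\<beta> \<le> \<beta>2" "feasible_within \<beta>2 sol"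
  shows "feasible_within \<beta>2 res"
  using assms
proof (induction rule: alg3_loop.induct)
  case (stop \<beta>1 \<beta>2 \<beta> sol)
  then show ?case by simp
next
  case (infeas \<beta> S' Out' \<sigma>' r \<beta>2 sol res \<beta>1)
  then show ?case by simp
next
  case (feas \<beta> S' Out' \<sigma>' r \<beta>1 res \<beta>2 sol)
  have "feasible_within \<beta> (S', Out', \<sigma>')"
    using A_out_feasible[OF feas(1,2)] A_out_alpha_le[OF _ feas(1)] feas.prems
    unfolding feasible_within_def by simp
  then have "feasible_within \<beta> res" using feas.IH feas.prems by simp
  then show ?case using feas.prems unfolding feasible_within_def by auto
qed

end

theorem theorem2:
  fixes V :: "'a set" and d :: "'a \<Rightarrow> 'a \<Rightarrow> real" and k q l :: nat
    and S Out :: "'a set" and \<sigma> :: "'a \<Rightarrow> 'a"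
  assumes "finite V"
    and "is_metric_on V d"
    and "k \<ge> 1"
    and "\<forall>i\<in>V. NR V d k q i > 0"
    and "alg3_out V d k q l S Out \<sigma>"
  shows "card S \<le> k \<and> card Out \<le> q \<and> alpha V d k q S Out \<sigma> \<le> 4 * OPT V d k q"
proof -
  interpret fair_kco_instance V d k q
    using assms(1-4) by unfold_locales
  obtain S0 Out0 \<sigma>0 where first: "A_out V d k q 2 S0 Out0 \<sigma>0"
    and loop: "alg3_loop V d k q l 1 2 1 (S0, Out0, \<sigma>0) (S, Out, \<sigma>)"
    using assms(5) unfolding alg3_out_def by blast
  have "card Out0 \<le> q" using A_out_card_outliers[OF _ first] by simp
  then have "feasible_within 2 (S0, Out0, \<sigma>0)"
    using A_out_feasible[OF first] A_out_alpha_le[OF _ first] unfolding feasible_within_def by simp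
  then have "feasible_within 2 (S, Out, \<sigma>)"
    using alg3_loop_feasible_within[OF loop] by simp
  then have feasible: "feasible V k q S Out \<sigma>" and "alpha V d k q S Out \<sigma> \<le> 2"
    unfolding feasible_within_def by auto
  then have "alpha V d k q S Out \<sigma> \<le> 4 * OPT V d k q"
    by (rule alpha_le_4_OPT)
  then show ?thesis
    using feasible unfolding feasible_def by simp
qed

end
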